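(* Let $\delta\in\mathbb{Z}$. The process $N_n-\theta(M_n)=N_n-\sum_{k=0}^{M_n}s_k$, $n\ge 1$, is a martingale with respect to the filtration $\{\mathcal{F}_n\}$. Moreover, this martingale is cubic integrable (i.e. $E|N_n-\theta(M_n)|^3<\infty$ for every $n\ge1$) if one of the following holds: (a) $\delta<0$ and $\limsup_k r_k<1$; (b) $\delta<0$, $\lim_k r_k=1$ and $\lim_k (1-r_k)/(1-r_{k-1})=1$; (c) $\delta\ge 0$.
   Context: Let $\{X_n,n\ge1\}$ be independent, identically distributed random variables with values in $\mathbb{Z}_+=\{0,1,2,\dots\}$ such that $p_k=P[X_1=k]>0$ for every $k\in\mathbb{Z}_+$ (set $p_m=0$ for integers $m\le -1$). For $k\in\mathbb{Z}_+$ let $y_k=\sum_{i>k}p_i=P[X_1>k]$, and set $y_m=1$ for integers $m\le-1$. The discrete failure rate is $r_k=p_k/y_{k-1}$, $k\in\mathbb{Z}_+$. Fix an integer $\delta$ and define the $\delta$ failure rate $s_k=p_{k+\delta}/y_{k-1}$ and $\theta(k)=\sum_{i=0}^k s_i$ for $k\in\mathbb{Z}_+$. Let $M_0=0$ and $M_n=\max\{X_1,\dots,X_n\}$ for $n\ge1$. Let $I_k=\mathbf{1}_{\{X_k>M_{k-1}+\delta\}}$ and $N_n=\sum_{k=1}^n I_k$ (the number of $\delta$-records among the first $n$ observations). Let $\mathcal{F}_0=\{\emptyset,\Omega\}$ and $\mathcal{F}_n=\sigma(X_1,\dots,X_n)$ for $n\ge1$. *)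

theory Defs
  imports "HOL-Probability.Probability"
begin

definition pk :: "'a measure \<Rightarrow> (nat \<Rightarrow> 'a \<Rightarrow> nat) \<Rightarrow> int \<Rightarrow> real" where
  "pk M X m = (if m < 0 then 0 else measure M {\<omega> \<in> space M. X 1 \<omega> = nat m})"

definition yk :: "'a measure \<Rightarrow> (nat \<Rightarrow> 'a \<Rightarrow> nat) \<Rightarrow> int \<Rightarrow> real" where
  "yk M X m = (if m < 0 then 1 else measure M {\<omega> \<in> space M. X 1 \<omega> > nat m})"

definition rk :: "'a measure \<Rightarrow> (nat \<Rightarrow> 'a \<Rightarrow> nat) \<Rightarrow> int \<Rightarrow> real" where
  "rk M X k = pk M X k / yk M X (k - 1)"

definition sk :: "'a measure \<Rightarrow> (nat \<Rightarrow> 'a \<Rightarrow> nat) \<Rightarrow> int \<Rightarrow> int \<Rightarrow> real" where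
  "sk M X \<delta> k = pk M X (k + \<delta>) / yk M X (k - 1)"

definition theta :: "'a measure \<Rightarrow> (nat \<Rightarrow> 'a \<Rightarrow> nat) \<Rightarrow> int \<Rightarrow> nat \<Rightarrow> real" where
  "theta M X \<delta> k = (\<Sum>i=0..k. sk M X \<delta> (int i))"

definition maxX :: "(nat \<Rightarrow> 'a \<Rightarrow> nat) \<Rightarrow> nat \<Rightarrow> 'a \<Rightarrow> nat" where
  "maxX X n \<omega> = (if n = 0 then 0 else Max ((\<lambda>i. X i \<omega>) ` {1..n}))"

definition Nrec :: "(nat \<Rightarrow> 'a \<Rightarrow> nat) \<Rightarrow> int \<Rightarrow> nat \<Rightarrow> 'a \<Rightarrow> real" where
  "Nrec X \<delta> n \<omega> = (\<Sum>k=1..n. if int (X k \<omega>) > int (maxX X (k - 1) \<omega>) + \<delta> then 1 else 0)"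

definition natfilt :: "'a measure \<Rightarrow> (nat \<Rightarrow> 'a \<Rightarrow> nat) \<Rightarrow> nat \<Rightarrow> 'a measure" where
  "natfilt M X n = sigma (space M) {X i -` A \<inter> space M | i A. i \<in> {1..n}}"

definition martingale_on ::
  "'a measure \<Rightarrow> (nat \<Rightarrow> 'a measure) \<Rightarrow> (nat \<Rightarrow> 'a \<Rightarrow> real) \<Rightarrow> bool" where
  "martingale_on M F Z \<longleftrightarrow>
     (\<forall>n\<ge>1. subalgebra M (F n) \<and> Z n \<in> borel_measurable (F n) \<and> integrable M (Z n)) \<and>
     (\<forall>m n. 1 \<le> m \<longrightarrow> m \<le> n \<longrightarrow> sets (F m) \<subseteq> sets (F n)) \<and>
     (\<forall>m n. 1 \<le> m \<longrightarrow> m \<le> n \<longrightarrow>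
        (AE \<omega> in M. real_cond_exp M (F m) (Z n) \<omega> = Z m \<omega>))"

end

theory Submission
  imports Defs
begin

text \<open>
  Write $Z_n = N_n - \theta(M_n)$. Its increment $Z_{n+1} - Z_n$ is the indicator of a
  $\delta$-record at time $n+1$ minus $\theta(M_{n+1}) - \theta(M_n)$. Given $\mathcal{F}_n$ and
  $M_n = m$, the first has expectation $P[X > m + \delta] = y_{m+\delta}$, and since
  $\theta(\max(m, X)) - \theta(m) = \sum_{m < i \le X} s_i$, the second has expectation
  $\sum_{i > m} s_i\, y_{i-1} = \sum_{i > m} p_{i+\delta} = y_{m+\delta}$ as well.

  For the moment bound, $|Z_n| \le n + \theta(M_n)$ and $P[M_n = m] \le n p_m$, so it suffices
  that $\sum_m p_m \theta(m)^3 < \infty$. With $\Lambda_m = \sum_{i<m} r_i$ one has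
  $y_m \le e^{-\Lambda_m}$, so $p_m (1 + \Lambda_m)^3 = O(\sqrt{y_m} - \sqrt{y_{m+1}})$
  telescopes; in cases (a) and (c) $\theta(m) = O(1 + \Lambda_m)$. In case (b) the ratio
  condition gives $1 - r_k \ge c\, 2^{-k}$, so $\theta(m) = O((m+1)\, 2^{|\delta| m})$, while
  $r_k \to 1$ makes $y_m$ decay faster than any geometric sequence.
\<close>

lemma cube_add_le:
  fixes a b :: real
  assumes "0 \<le> a" "0 \<le> b"
  shows "(a + b) ^ 3 \<le> 4 * (a ^ 3 + b ^ 3)"
proof -
  have "4 * (a ^ 3 + b ^ 3) - (a + b) ^ 3 = 3 * (a + b) * (a - b)\<^sup>2"
    by (simp add: power2_eq_square power3_eq_cube algebra_simps)
  also have "\<dots> \<ge> 0" using assms by simp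
  finally show ?thesis by simp
qed

lemma cube_le_exp_half:
  fixes t :: real
  assumes "0 \<le> t"
  shows "(1 + t) ^ 3 \<le> 512 * exp (t / 2)"
proof -
  have "(1 + t) ^ 3 \<le> (8 * (1 + t / 8)) ^ 3" by (rule power_mono) (use assms in auto)
  also have "\<dots> = 512 * (1 + t / 8) ^ 3" by (subst power_mult_distrib) simp
  also have "(1 + t / 8) ^ 3 \<le> (1 + t / 8) ^ 4" by (rule power_increasing) (use assms in auto)
  also have "\<dots> \<le> exp (t / 8) ^ 4" by (rule power_mono[OF exp_ge_add_one_self]) (use assms in auto)
  also have "exp (t / 8) ^ 4 = exp (t / 2)" using exp_of_nat_mult[of 4 "t / 8"] by simp
  finally show ?thesis by simp
qed

lemma diff_div_sqrt_le:
  fixes a b :: real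
  assumes "0 \<le> b" "b \<le> a" "0 < a"
  shows "(a - b) / sqrt a \<le> 2 * (sqrt a - sqrt b)"
proof -
  have "a - b = (sqrt a - sqrt b) * (sqrt a + sqrt b)" using assms by (simp add: algebra_simps)
  also have "\<dots> \<le> (sqrt a - sqrt b) * (2 * sqrt a)" by (rule mult_left_mono) (use assms in auto)
  finally show ?thesis using assms by (simp add: divide_simps algebra_simps)
qed

lemma Suc_cube_le_8_power: "(real m + 1) ^ 3 \<le> 8 ^ m"
proof -
  have "Suc m \<le> 2 ^ m" by (rule Suc_leI[OF less_exp])
  then have "real m + 1 \<le> 2 ^ m"
    by (metis of_nat_Suc of_nat_le_iff of_nat_numeral of_nat_power add.commute)
  then have "(real m + 1) ^ 3 \<le> (2 ^ m) ^ 3" by (rule power_mono) simp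
  also have "((2::real) ^ m) ^ 3 = 8 ^ m" by (simp flip: power_mult add: mult.commute[of m] power_mult)
  finally show ?thesis .
qed

lemma sum_shifted_index_le:
  fixes g :: "nat \<Rightarrow> real"
  assumes "\<And>j. 0 \<le> g j"
  shows "(\<Sum>i=d..m. g (i - d)) \<le> (\<Sum>j\<le>m. g j)"
proof (cases "d \<le> m")
  case True
  have "(\<Sum>i=d..m. g (i - d)) = (\<Sum>j=0..m-d. g j)"
    using True sum.atLeastAtMost_shift_0[of d m "\<lambda>i. g (i - d)"] by simp
  also have "\<dots> \<le> (\<Sum>j\<le>m. g j)" by (rule sum_mono2) (use assms in auto)
  finally show ?thesis .
qed (use assms in \<open>simp add: sum_nonneg\<close>)

lemma measurable_compose_count_space2:
  assumes "f \<in> measurable N (count_space (UNIV::nat set))" "g \<in> measurable N (count_space (UNIV::nat set))"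
    and "\<And>a b. h a b \<in> space K"
  shows "(\<lambda>\<omega>. h (f \<omega>) (g \<omega>)) \<in> measurable N K"
proof -
  have "(\<lambda>\<omega>. (f \<omega>, g \<omega>)) \<in> measurable N (count_space UNIV \<Otimes>\<^sub>M count_space UNIV)"
    using assms by (intro measurable_Pair) auto
  also have "count_space (UNIV::nat set) \<Otimes>\<^sub>M count_space (UNIV::nat set) = count_space UNIV"
    by (simp add: pair_measure_countable)
  finally have "(\<lambda>\<omega>. case_prod h (f \<omega>, g \<omega>)) \<in> measurable N K"
    by (rule measurable_compose) (use assms(3) in auto)
  then show ?thesis by simp
qed

lemma level_set_in_sets:
  assumes "Y \<in> measurable M (count_space (UNIV::nat set))"
  shows "{\<omega>\<in>space M. Y \<omega> = y} \<in> sets M"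
proof -
  have "Y -` {y} \<inter> space M \<in> sets M" by (rule measurable_sets[OF assms]) simp
  moreover have "Y -` {y} \<inter> space M = {\<omega>\<in>space M. Y \<omega> = y}" by blast
  ultimately show ?thesis by simp
qed

lemma nn_integral_split_level_sets:
  assumes Y: "Y \<in> measurable M (count_space (UNIV::nat set))" and f: "f \<in> borel_measurable M"
  shows "(\<integral>\<^sup>+\<omega>. f \<omega> \<partial>M) = (\<Sum>y. \<integral>\<^sup>+\<omega>. f \<omega> * indicator {\<omega>\<in>space M. Y \<omega> = y} \<omega> \<partial>M)"
proof -
  have df: "disjoint_family (\<lambda>y. {\<omega>\<in>space M. Y \<omega> = y})" by (auto simp: disjoint_family_on_def)
  have [measurable]: "f \<in> borel_measurable M" "\<And>y. {\<omega>\<in>space M. Y \<omega> = y} \<in> sets M"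
    using f level_set_in_sets[OF Y] by auto
  have "(\<integral>\<^sup>+\<omega>. f \<omega> \<partial>M) = (\<integral>\<^sup>+\<omega>. (\<Sum>y. f \<omega> * indicator {\<omega>\<in>space M. Y \<omega> = y} \<omega>) \<partial>M)"
  proof (rule nn_integral_cong)
    fix \<omega> assume "\<omega> \<in> space M"
    then show "f \<omega> = (\<Sum>y. f \<omega> * indicator {\<omega>\<in>space M. Y \<omega> = y} \<omega>)"
      using suminf_cmult_indicator[OF df, of \<omega> "Y \<omega>" "\<lambda>_. f \<omega>"] by simp
  qed
  also have "\<dots> = (\<Sum>y. \<integral>\<^sup>+\<omega>. f \<omega> * indicator {\<omega>\<in>space M. Y \<omega> = y} \<omega> \<partial>M)"
    by (rule nn_integral_suminf) measurable
  finally show ?thesis .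
qed

lemma suminf_ennreal_swap: "(\<Sum>x. \<Sum>i. f i x) = (\<Sum>i. \<Sum>x. f i x :: ennreal)"
proof -
  have "(\<Sum>x. \<Sum>i. f i x) = (\<integral>\<^sup>+x. (\<Sum>i. f i x) \<partial>count_space UNIV)"
    by (simp add: nn_integral_count_space_nat)
  also have "\<dots> = (\<Sum>i. \<integral>\<^sup>+x. f i x \<partial>count_space UNIV)" by (rule nn_integral_suminf) simp
  also have "\<dots> = (\<Sum>i. \<Sum>x. f i x)" by (simp add: nn_integral_count_space_nat)
  finally show ?thesis .
qed

section \<open>Running maxima, \<delta>-records and the natural filtration\<close>

lemma maxX_0 [simp]: "maxX X 0 \<omega> = 0"
  by (simp add: maxX_def)

lemma maxX_Suc: "maxX X (Suc n) \<omega> = max (maxX X n \<omega>) (X (Suc n) \<omega>)"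
proof (cases n)
  case (Suc k)
  have "(\<lambda>i. X i \<omega>) ` {1..Suc n} = insert (X (Suc n) \<omega>) ((\<lambda>i. X i \<omega>) ` {1..n})"
    by (simp add: atLeastAtMostSuc_conv)
  then show ?thesis using Suc unfolding maxX_def by (simp add: Max_insert max.commute)
qed (simp add: maxX_def)

lemma maxX_attained:
  assumes "1 \<le> n"
  obtains i where "i \<in> {1..n}" "X i \<omega> = maxX X n \<omega>"
proof -
  have "Max ((\<lambda>i. X i \<omega>) ` {1..n}) \<in> (\<lambda>i. X i \<omega>) ` {1..n}" by (rule Max_in) (use assms in auto)
  then obtain i where "i \<in> {1..n}" "X i \<omega> = Max ((\<lambda>i. X i \<omega>) ` {1..n})" by auto
  then show ?thesis using assms that by (simp add: maxX_def)
qed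

lemma Nrec_Suc:
  "Nrec X \<delta> (Suc n) \<omega> = Nrec X \<delta> n \<omega> + (if int (X (Suc n) \<omega>) > int (maxX X n \<omega>) + \<delta> then 1 else 0)"
  by (simp add: Nrec_def)

lemma Nrec_nonneg: "0 \<le> Nrec X \<delta> n \<omega>"
  unfolding Nrec_def by (rule sum_nonneg) simp

lemma Nrec_le: "Nrec X \<delta> n \<omega> \<le> real n"
proof -
  have "Nrec X \<delta> n \<omega> \<le> of_nat (card {1..n}) * 1" unfolding Nrec_def by (rule sum_bounded_above) simp
  then show ?thesis by simp
qed

lemma pk_nonneg [simp]: "0 \<le> pk M X k"
  by (simp add: pk_def)

lemma theta_nonneg: "0 \<le> theta M X \<delta> m"
  unfolding theta_def sk_def pk_def yk_def by (rule sum_nonneg) simp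

lemma theta_max_diff: "theta M X \<delta> (max m x) - theta M X \<delta> m = (\<Sum>i\<in>{m<..x}. sk M X \<delta> (int i))"
proof (cases "x \<le> m")
  case False
  then have "{0..x} = {0..m} \<union> {m<..x}" "{0..m} \<inter> {m<..x} = {}" by auto
  then have "theta M X \<delta> x = theta M X \<delta> m + (\<Sum>i\<in>{m<..x}. sk M X \<delta> (int i))"
    unfolding theta_def by (simp add: sum.union_disjoint)
  then show ?thesis using False by (simp add: max_def)
qed (simp add: max_def)

lemma sets_natfilt: "sets (natfilt M X n) = sigma_sets (space M) {X i -` A \<inter> space M | i A. i \<in> {1..n}}"
  unfolding natfilt_def by (rule sets_measure_of) auto

lemma space_natfilt [simp]: "space (natfilt M X n) = space M"
  unfolding natfilt_def by (rule space_measure_of) auto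

lemma natfilt_generator_eq:
  "{X i -` A \<inter> space M | i A. i \<in> I} = (\<Union>i\<in>I. {X i -` A \<inter> space M | A. A \<in> sets (count_space UNIV)})"
proof (intro set_eqI iffI)
  fix x assume "x \<in> {X i -` A \<inter> space M | i A. i \<in> I}"
  then obtain i A where "x = X i -` A \<inter> space M" "i \<in> I" by blast
  then show "x \<in> (\<Union>i\<in>I. {X i -` A \<inter> space M | A. A \<in> sets (count_space UNIV)})"
    by (intro UN_I[of i] CollectI exI[of _ A]) auto
next
  fix x assume "x \<in> (\<Union>i\<in>I. {X i -` A \<inter> space M | A. A \<in> sets (count_space UNIV)})"
  then obtain i where i: "i \<in> I" "x \<in> {X i -` A \<inter> space M | A. A \<in> sets (count_space UNIV)}" by blast
  then obtain A where "x = X i -` A \<inter> space M" by blast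
  then show "x \<in> {X i -` A \<inter> space M | i A. i \<in> I}"
    using i(1) by (intro CollectI exI[of _ i] exI[of _ A]) auto
qed

lemma natfilt_mono: "m \<le> n \<Longrightarrow> sets (natfilt M X m) \<subseteq> sets (natfilt M X n)"
  unfolding sets_natfilt by (rule sigma_sets_mono') fastforce

lemma measurable_X_natfilt:
  assumes "1 \<le> i" "i \<le> n"
  shows "X i \<in> measurable (natfilt M X n) (count_space UNIV)"
proof (rule measurableI)
  fix A
  have "X i -` A \<inter> space M \<in> {X i -` A \<inter> space M | i A. i \<in> {1..n}}" using assms by auto
  then show "X i -` A \<inter> space (natfilt M X n) \<in> sets (natfilt M X n)"
    unfolding sets_natfilt space_natfilt by (rule sigma_sets.Basic)
qed simp

lemma measurable_maxX_natfilt: "k \<le> n \<Longrightarrow> maxX X k \<in> measurable (natfilt M X n) (count_space UNIV)"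
proof (induction k)
  case 0
  have "maxX X 0 = (\<lambda>_. 0)" by (rule ext) simp
  then show ?case by simp
next
  case (Suc k)
  have "(\<lambda>\<omega>. max (maxX X k \<omega>) (X (Suc k) \<omega>)) \<in> measurable (natfilt M X n) (count_space UNIV)"
    using Suc measurable_X_natfilt[where i="Suc k" and n=n]
    by (intro measurable_compose_count_space2[where h=max]) auto
  then show ?case by (simp add: maxX_Suc[abs_def])
qed

locale iid_nat_sequence = prob_space M for M :: "'a measure" +
  fixes X :: "nat \<Rightarrow> 'a \<Rightarrow> nat"
  assumes measurable_X: "\<And>i. i \<ge> 1 \<Longrightarrow> X i \<in> measurable M (count_space UNIV)"
    and indep_X: "indep_vars (\<lambda>_. count_space UNIV) X {1..}"
    and distr_X: "\<And>i. i \<ge> 1 \<Longrightarrow> distr M (count_space UNIV) (X i) = distr M (count_space UNIV) (X 1)"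
    and prob_X1_pos: "\<And>k. measure M {\<omega> \<in> space M. X 1 \<omega> = k} > 0"
begin

lemma events_X: "i \<ge> 1 \<Longrightarrow> {\<omega>\<in>space M. P (X i \<omega>)} \<in> events"
  using measurable_sets[OF measurable_X, of i "{x. P x}"] by (simp add: Int_def conj_commute)

lemma prob_X_eq_prob_X1:
  assumes "i \<ge> 1"
  shows "prob {\<omega>\<in>space M. P (X i \<omega>)} = prob {\<omega>\<in>space M. P (X 1 \<omega>)}"
proof -
  have "measure (distr M (count_space UNIV) (X i)) {x. P x} = measure (distr M (count_space UNIV) (X 1)) {x. P x}"
    using distr_X[OF assms] by simp
  then have "prob (X i -` {x. P x} \<inter> space M) = prob (X 1 -` {x. P x} \<inter> space M)"
    using measurable_X[OF assms] measurable_X[of 1] by (simp add: measure_distr)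
  moreover have "\<And>j. X j -` {x. P x} \<inter> space M = {\<omega>\<in>space M. P (X j \<omega>)}" by blast
  ultimately show ?thesis by simp
qed

lemma subalgebra_natfilt: "subalgebra M (natfilt M X n)"
proof -
  have "{X i -` A \<inter> space M | i A. i \<in> {1..n}} \<subseteq> sets M"
    using measurable_sets[OF measurable_X] by auto
  then have "sets (natfilt M X n) \<subseteq> sets M" unfolding sets_natfilt by (rule sets.sigma_sets_subset)
  then show ?thesis unfolding subalgebra_def by simp
qed

lemma sets_natfilt_subset_events: "B \<in> sets (natfilt M X n) \<Longrightarrow> B \<in> events"
  using subalgebra_natfilt[of n] unfolding subalgebra_def by blast

lemma measurable_maxX: "maxX X n \<in> measurable M (count_space UNIV)"
  by (rule measurable_from_subalg[OF subalgebra_natfilt measurable_maxX_natfilt[OF order_refl]])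

lemma maxX_level_set_natfilt: "{\<omega>\<in>space M. maxX X n \<omega> = m} \<in> sets (natfilt M X n)"
  using level_set_in_sets[OF measurable_maxX_natfilt[OF order_refl]] by simp

lemma indep_natfilt_X_Suc:
  assumes "C \<in> sets (natfilt M X n)"
  shows "prob (C \<inter> (X (Suc n) -` S \<inter> space M)) = prob C * prob (X (Suc n) -` S \<inter> space M)"
proof -
  let ?E = "\<lambda>i. {X i -` A \<inter> space M | A. A \<in> sets (count_space (UNIV::nat set))}"
  let ?I = "\<lambda>b::bool. if b then {1..n} else {Suc n}"
  have E: "indep_sets ?E {1..}" using indep_X unfolding indep_vars_def2 by blast
  have "indep_sets (\<lambda>b. sigma_sets (space M) (\<Union>i\<in>?I b. ?E i)) UNIV"
  proof (rule indep_sets_collect_sigma)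
    show "indep_sets ?E (\<Union>b\<in>UNIV. ?I b)" by (rule indep_sets_mono_index[OF _ E]) auto
    show "Int_stable (?E i)" for i
    proof (rule Int_stableI)
      fix a b assume "a \<in> ?E i" "b \<in> ?E i"
      then obtain A B where "a = X i -` A \<inter> space M" "b = X i -` B \<inter> space M" by auto
      then have "a \<inter> b = X i -` (A \<inter> B) \<inter> space M" by auto
      then show "a \<inter> b \<in> ?E i" by (intro CollectI exI[of _ "A \<inter> B"]) simp
    qed
    show "disjoint_family_on ?I UNIV" by (auto simp: disjoint_family_on_def)
  qed
  moreover have "(\<lambda>b. sigma_sets (space M) (\<Union>i\<in>?I b. ?E i)) =
      case_bool (sigma_sets (space M) (\<Union>i\<in>{1..n}. ?E i)) (sigma_sets (space M) (?E (Suc n)))"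
    by (rule ext) (simp split: bool.split)
  ultimately have "indep_set (sigma_sets (space M) (\<Union>i\<in>{1..n}. ?E i)) (sigma_sets (space M) (?E (Suc n)))"
    unfolding indep_set_def by simp
  then have indep: "\<And>a b. a \<in> sigma_sets (space M) (\<Union>i\<in>{1..n}. ?E i) \<Longrightarrow>
      b \<in> sigma_sets (space M) (?E (Suc n)) \<Longrightarrow> prob (a \<inter> b) = prob a * prob b"
    unfolding indep_sets2_eq by blast
  have "C \<in> sigma_sets (space M) (\<Union>i\<in>{1..n}. ?E i)"
    using assms unfolding sets_natfilt natfilt_generator_eq by simp
  moreover have "X (Suc n) -` S \<inter> space M \<in> sigma_sets (space M) (?E (Suc n))"
    by (rule sigma_sets.Basic) auto
  ultimately show ?thesis by (rule indep)
qed

lemma pk_nat: "pk M X (int x) = prob {\<omega>\<in>space M. X 1 \<omega> = x}"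
  by (simp add: pk_def)

lemma pk_neg: "k < 0 \<Longrightarrow> pk M X k = 0"
  by (simp add: pk_def)

lemma pk_pos: "pk M X (int k) > 0"
  using prob_X1_pos by (simp add: pk_def)

lemma yk_neg: "m < 0 \<Longrightarrow> yk M X m = 1"
  by (simp add: yk_def)

lemma yk_le_1: "yk M X m \<le> 1"
  by (simp add: yk_def)

lemma yk_pred_eq: "yk M X (int k - 1) = pk M X (int k) + yk M X (int k)"
proof -
  have "yk M X (int k - 1) = prob {\<omega>\<in>space M. k \<le> X 1 \<omega>}"
  proof (cases k)
    case 0
    then show ?thesis by (simp add: yk_neg prob_space)
  next
    case (Suc j)
    then have "{\<omega>\<in>space M. k \<le> X 1 \<omega>} = {\<omega>\<in>space M. j < X 1 \<omega>}" by auto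
    then show ?thesis using Suc by (simp add: yk_def)
  qed
  also have "{\<omega>\<in>space M. k \<le> X 1 \<omega>} = {\<omega>\<in>space M. X 1 \<omega> = k} \<union> {\<omega>\<in>space M. X 1 \<omega> > k}" by auto
  also have "prob \<dots> = prob {\<omega>\<in>space M. X 1 \<omega> = k} + prob {\<omega>\<in>space M. X 1 \<omega> > k}"
    by (rule finite_measure_Union) (auto intro: events_X)
  finally show ?thesis by (simp add: yk_def pk_def)
qed

lemma yk_pos: "yk M X m > 0"
proof (cases "m < 0")
  case False
  then obtain k where k: "m = int k" by (metis nonneg_int_cases not_less)
  have "0 < pk M X (int (Suc k))" by (rule pk_pos)
  moreover have "0 \<le> yk M X (int (Suc k))" by (simp add: yk_def)
  ultimately show ?thesis using yk_pred_eq[of "Suc k"] k by simp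
qed (simp add: yk_neg)

lemma suminf_pk_from:
  assumes "c \<ge> 0"
  shows "(\<Sum>i. ennreal (if int i \<ge> c then pk M X (int i + e) else 0)) = ennreal (yk M X (c + e - 1))"
proof -
  define A where "A i = (if int i \<ge> c then {\<omega>\<in>space M. int (X 1 \<omega>) = int i + e} else {})" for i
  have A_events: "A i \<in> events" for i
    using events_X[of 1 "\<lambda>v. int v = int i + e"] unfolding A_def by simp
  have emeasure_A: "emeasure M (A i) = ennreal (if int i \<ge> c then pk M X (int i + e) else 0)" for i
  proof (cases "int i \<ge> c \<and> int i + e \<ge> 0")
    case True
    then have "A i = {\<omega>\<in>space M. X 1 \<omega> = nat (int i + e)}" unfolding A_def by auto
    then show ?thesis using True by (simp add: emeasure_eq_measure pk_def)
  next
    case False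
    then have "A i = {}" unfolding A_def by auto
    then show ?thesis using False by (auto simp: pk_neg)
  qed
  have "(\<Union>i. A i) = {\<omega>\<in>space M. int (X 1 \<omega>) \<ge> c + e}"
  proof (intro set_eqI iffI)
    fix \<omega> assume "\<omega> \<in> {\<omega>\<in>space M. int (X 1 \<omega>) \<ge> c + e}"
    then have "\<omega> \<in> A (nat (int (X 1 \<omega>) - e))" unfolding A_def using assms by auto
    then show "\<omega> \<in> (\<Union>i. A i)" by blast
  qed (auto simp: A_def split: if_splits)
  moreover have "(\<Sum>i. emeasure M (A i)) = emeasure M (\<Union>i. A i)"
  proof (rule suminf_emeasure)
    show "range A \<subseteq> events" using A_events by auto
    show "disjoint_family A" by (auto simp: disjoint_family_on_def A_def)
  qed
  ultimately have "(\<Sum>i. emeasure M (A i)) = emeasure M {\<omega>\<in>space M. int (X 1 \<omega>) \<ge> c + e}" by simp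
  also have "\<dots> = ennreal (yk M X (c + e - 1))"
  proof (cases "c + e - 1 < 0")
    case True
    then have "{\<omega>\<in>space M. int (X 1 \<omega>) \<ge> c + e} = space M" by auto
    then show ?thesis using True by (simp add: yk_neg emeasure_space_1)
  next
    case False
    then have "{\<omega>\<in>space M. int (X 1 \<omega>) \<ge> c + e} = {\<omega>\<in>space M. X 1 \<omega> > nat (c + e - 1)}" by auto
    then show ?thesis using False events_X[of 1] by (simp add: yk_def emeasure_eq_measure)
  qed
  finally show ?thesis unfolding emeasure_A .
qed

lemma suminf_record_pk:
  "(\<Sum>x. ennreal (if int x > int m + \<delta> then 1 else 0) * ennreal (pk M X (int x))) = ennreal (yk M X (int m + \<delta>))"
proof -
  define c where "c = max 0 (int m + \<delta> + 1)"
  have "(\<Sum>x. ennreal (if int x > int m + \<delta> then 1 else 0) * ennreal (pk M X (int x))) =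
      (\<Sum>x. ennreal (if int x \<ge> c then pk M X (int x + 0) else 0))"
    by (rule suminf_cong) (auto simp: c_def)
  also have "\<dots> = ennreal (yk M X (c + 0 - 1))" by (rule suminf_pk_from) (simp add: c_def)
  also have "yk M X (c + 0 - 1) = yk M X (int m + \<delta>)"
    by (cases "int m + \<delta> + 1 \<ge> 0") (auto simp: c_def yk_neg)
  finally show ?thesis .
qed

lemma suminf_sk_pk_tail:
  "(\<Sum>x. ennreal (if m < i \<and> i \<le> x then sk M X \<delta> (int i) else 0) * ennreal (pk M X (int x))) =
    ennreal (if int i \<ge> int m + 1 then pk M X (int i + \<delta>) else 0)"
proof (cases "m < i")
  case True
  have "(\<Sum>x. ennreal (if m < i \<and> i \<le> x then sk M X \<delta> (int i) else 0) * ennreal (pk M X (int x))) =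
      (\<Sum>x. ennreal (sk M X \<delta> (int i)) * ennreal (if int x \<ge> int i then pk M X (int x + 0) else 0))"
    by (rule suminf_cong) (use True in auto)
  also have "\<dots> = ennreal (sk M X \<delta> (int i)) * ennreal (yk M X (int i + 0 - 1))"
    by (simp only: ennreal_suminf_cmult suminf_pk_from[of "int i"])
  also have "\<dots> = ennreal (pk M X (int i + \<delta>))"
    using yk_pos[of "int i - 1"] by (simp add: sk_def ennreal_mult[symmetric])
  finally show ?thesis using True by simp
qed simp

lemma suminf_theta_increment_pk:
  "(\<Sum>x. ennreal (theta M X \<delta> (max m x) - theta M X \<delta> m) * ennreal (pk M X (int x))) = ennreal (yk M X (int m + \<delta>))"
proof -
  have increment: "ennreal (theta M X \<delta> (max m x) - theta M X \<delta> m) =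
      (\<Sum>i. ennreal (if m < i \<and> i \<le> x then sk M X \<delta> (int i) else 0))" for x
  proof -
    have "(\<Sum>i. ennreal (if m < i \<and> i \<le> x then sk M X \<delta> (int i) else 0)) =
        (\<Sum>i\<in>{m<..x}. ennreal (if m < i \<and> i \<le> x then sk M X \<delta> (int i) else 0))"
      by (rule suminf_finite) auto
    also have "\<dots> = ennreal (\<Sum>i\<in>{m<..x}. sk M X \<delta> (int i))"
      by (simp add: sk_def pk_def yk_def)
    finally show ?thesis by (simp add: theta_max_diff)
  qed
  have "(\<Sum>x. ennreal (theta M X \<delta> (max m x) - theta M X \<delta> m) * ennreal (pk M X (int x))) =
     (\<Sum>i. \<Sum>x. ennreal (if m < i \<and> i \<le> x then sk M X \<delta> (int i) else 0) * ennreal (pk M X (int x)))"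
    unfolding increment by (simp only: ennreal_suminf_multc suminf_ennreal_swap)
  also have "\<dots> = (\<Sum>i. ennreal (if int i \<ge> int m + 1 then pk M X (int i + \<delta>) else 0))"
    unfolding suminf_sk_pk_tail ..
  also have "\<dots> = ennreal (yk M X (int m + 1 + \<delta> - 1))" by (rule suminf_pk_from) simp
  finally show ?thesis by simp
qed

lemma emeasure_natfilt_Int_X_Suc:
  assumes C: "C \<in> sets (natfilt M X n)"
  shows "emeasure M (C \<inter> {\<omega>\<in>space M. X (Suc n) \<omega> = x}) = emeasure M C * ennreal (pk M X (int x))"
proof -
  have "{\<omega>\<in>space M. X (Suc n) \<omega> = x} = X (Suc n) -` {x} \<inter> space M" by blast
  then have "prob (C \<inter> {\<omega>\<in>space M. X (Suc n) \<omega> = x}) = prob C * prob {\<omega>\<in>space M. X (Suc n) \<omega> = x}"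
    using indep_natfilt_X_Suc[OF C] by simp
  also have "prob {\<omega>\<in>space M. X (Suc n) \<omega> = x} = pk M X (int x)"
    unfolding pk_nat by (rule prob_X_eq_prob_X1) simp
  finally show ?thesis
    using sets_natfilt_subset_events[OF C] by (simp add: emeasure_eq_measure ennreal_mult)
qed

lemma nn_integral_maxX_X_Suc:
  fixes g :: "nat \<Rightarrow> nat \<Rightarrow> ennreal"
  assumes B: "B \<in> sets (natfilt M X n)"
  shows "(\<integral>\<^sup>+\<omega>. g (maxX X n \<omega>) (X (Suc n) \<omega>) * indicator B \<omega> \<partial>M) =
    (\<Sum>m. emeasure M (B \<inter> {\<omega>\<in>space M. maxX X n \<omega> = m}) * (\<Sum>x. g m x * ennreal (pk M X (int x))))"
proof -
  let ?Y = "maxX X n" and ?Z = "X (Suc n)"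
  let ?B = "\<lambda>m. B \<inter> {\<omega>\<in>space M. ?Y \<omega> = m}"
  have Y: "?Y \<in> measurable M (count_space UNIV)" by (rule measurable_maxX)
  have Z: "?Z \<in> measurable M (count_space UNIV)" by (rule measurable_X) simp
  have [measurable]: "B \<in> events" by (rule sets_natfilt_subset_events[OF B])
  have [measurable]: "\<And>y. {\<omega>\<in>space M. ?Y \<omega> = y} \<in> sets M" "\<And>y. {\<omega>\<in>space M. ?Z \<omega> = y} \<in> sets M"
    using level_set_in_sets[OF Y] level_set_in_sets[OF Z] by auto
  have "(\<lambda>\<omega>. g (?Y \<omega>) (?Z \<omega>)) \<in> borel_measurable M"
    by (rule measurable_compose_count_space2[OF Y Z]) simp
  then have [measurable]: "(\<lambda>\<omega>. g (?Y \<omega>) (?Z \<omega>) * indicator B \<omega>) \<in> borel_measurable M"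
    by measurable
  have joint: "emeasure M (?B m \<inter> {\<omega>\<in>space M. ?Z \<omega> = x}) = emeasure M (?B m) * ennreal (pk M X (int x))"
    for m x using B maxX_level_set_natfilt by (intro emeasure_natfilt_Int_X_Suc) blast
  have cell: "(\<integral>\<^sup>+\<omega>. g (?Y \<omega>) (?Z \<omega>) * indicator B \<omega> * indicator {\<omega>\<in>space M. ?Y \<omega> = m} \<omega>
      * indicator {\<omega>\<in>space M. ?Z \<omega> = x} \<omega> \<partial>M) = g m x * emeasure M (?B m \<inter> {\<omega>\<in>space M. ?Z \<omega> = x})"
    for m x
  proof -
    have "(\<integral>\<^sup>+\<omega>. g (?Y \<omega>) (?Z \<omega>) * indicator B \<omega> * indicator {\<omega>\<in>space M. ?Y \<omega> = m} \<omega>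
        * indicator {\<omega>\<in>space M. ?Z \<omega> = x} \<omega> \<partial>M) =
      (\<integral>\<^sup>+\<omega>. g m x * indicator (?B m \<inter> {\<omega>\<in>space M. ?Z \<omega> = x}) \<omega> \<partial>M)"
      by (rule nn_integral_cong) (simp split: split_indicator)
    also have "\<dots> = g m x * emeasure M (?B m \<inter> {\<omega>\<in>space M. ?Z \<omega> = x})"
      by (rule nn_integral_cmult_indicator) measurable
    finally show ?thesis .
  qed
  have "(\<integral>\<^sup>+\<omega>. g (?Y \<omega>) (?Z \<omega>) * indicator B \<omega> \<partial>M) =
      (\<Sum>m. \<Sum>x. \<integral>\<^sup>+\<omega>. g (?Y \<omega>) (?Z \<omega>) * indicator B \<omega> * indicator {\<omega>\<in>space M. ?Y \<omega> = m} \<omega>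
        * indicator {\<omega>\<in>space M. ?Z \<omega> = x} \<omega> \<partial>M)"
    by (subst nn_integral_split_level_sets[OF Y], measurable)
      (rule suminf_cong, rule nn_integral_split_level_sets[OF Z], measurable)
  also have "\<dots> = (\<Sum>m. \<Sum>x. g m x * emeasure M (?B m \<inter> {\<omega>\<in>space M. ?Z \<omega> = x}))"
    unfolding cell ..
  also have "\<dots> = (\<Sum>m. emeasure M (?B m) * (\<Sum>x. g m x * ennreal (pk M X (int x))))"
    unfolding joint ennreal_suminf_cmult[symmetric] by (simp add: ac_simps)
  finally show ?thesis .
qed

section \<open>The compensated record count is a martingale\<close>

definition record_ind :: "int \<Rightarrow> nat \<Rightarrow> 'a \<Rightarrow> real" where
  "record_ind \<delta> n \<omega> = (if int (X (Suc n) \<omega>) > int (maxX X n \<omega>) + \<delta> then 1 else 0)"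

definition theta_incr :: "int \<Rightarrow> nat \<Rightarrow> 'a \<Rightarrow> real" where
  "theta_incr \<delta> n \<omega> = theta M X \<delta> (maxX X (Suc n) \<omega>) - theta M X \<delta> (maxX X n \<omega>)"

definition compensated_records :: "int \<Rightarrow> nat \<Rightarrow> 'a \<Rightarrow> real" where
  "compensated_records \<delta> n \<omega> = Nrec X \<delta> n \<omega> - theta M X \<delta> (maxX X n \<omega>)"

lemma compensated_records_0: "compensated_records \<delta> 0 = (\<lambda>_. - theta M X \<delta> 0)"
  by (simp add: compensated_records_def fun_eq_iff Nrec_def)

lemma compensated_records_Suc:
  "compensated_records \<delta> (Suc n) \<omega> = compensated_records \<delta> n \<omega> + record_ind \<delta> n \<omega> - theta_incr \<delta> n \<omega>"
  by (simp add: compensated_records_def record_ind_def theta_incr_def Nrec_Suc)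

lemma theta_incr_eq:
  "theta_incr \<delta> n \<omega> = theta M X \<delta> (max (maxX X n \<omega>) (X (Suc n) \<omega>)) - theta M X \<delta> (maxX X n \<omega>)"
  by (simp add: theta_incr_def maxX_Suc)

lemma theta_incr_nonneg: "0 \<le> theta_incr \<delta> n \<omega>"
  unfolding theta_incr_eq theta_max_diff sk_def by (rule sum_nonneg) (simp add: yk_def)

lemma measurable_record_ind_natfilt: "record_ind \<delta> n \<in> borel_measurable (natfilt M X (Suc n))"
proof -
  have "(\<lambda>\<omega>. (\<lambda>a b. if int b > int a + \<delta> then 1 else (0::real)) (maxX X n \<omega>) (X (Suc n) \<omega>))
      \<in> borel_measurable (natfilt M X (Suc n))"
    by (rule measurable_compose_count_space2[OF measurable_maxX_natfilt measurable_X_natfilt]) simp_all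
  then show ?thesis by (simp add: record_ind_def[abs_def])
qed

lemma measurable_theta_incr_natfilt: "theta_incr \<delta> n \<in> borel_measurable (natfilt M X (Suc n))"
proof -
  have "(\<lambda>\<omega>. (\<lambda>a b. theta M X \<delta> (max a b) - theta M X \<delta> a) (maxX X n \<omega>) (X (Suc n) \<omega>))
      \<in> borel_measurable (natfilt M X (Suc n))"
    by (rule measurable_compose_count_space2[OF measurable_maxX_natfilt measurable_X_natfilt]) simp_all
  then show ?thesis by (simp add: theta_incr_eq[abs_def])
qed

lemma measurable_compensated_records_natfilt:
  "compensated_records \<delta> n \<in> borel_measurable (natfilt M X n)"
proof (induction n)
  case (Suc n)
  have "subalgebra (natfilt M X (Suc n)) (natfilt M X n)"
    unfolding subalgebra_def using natfilt_mono[of n "Suc n"] by simp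
  then have "compensated_records \<delta> n \<in> borel_measurable (natfilt M X (Suc n))"
    by (rule measurable_from_subalg[OF _ Suc])
  then show ?case
    using measurable_record_ind_natfilt measurable_theta_incr_natfilt
    by (simp add: compensated_records_Suc[abs_def])
qed (simp add: compensated_records_0)

lemma measurable_record_ind: "record_ind \<delta> n \<in> borel_measurable M"
  by (rule measurable_from_subalg[OF subalgebra_natfilt measurable_record_ind_natfilt])

lemma measurable_theta_incr: "theta_incr \<delta> n \<in> borel_measurable M"
  by (rule measurable_from_subalg[OF subalgebra_natfilt measurable_theta_incr_natfilt])

lemma measurable_compensated_records: "compensated_records \<delta> n \<in> borel_measurable M"
  by (rule measurable_from_subalg[OF subalgebra_natfilt measurable_compensated_records_natfilt])

lemma nn_integral_record_ind_eq_theta_incr: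
  assumes B: "B \<in> sets (natfilt M X n)"
  shows "(\<integral>\<^sup>+\<omega>. ennreal (record_ind \<delta> n \<omega> * indicator B \<omega>) \<partial>M) =
    (\<integral>\<^sup>+\<omega>. ennreal (theta_incr \<delta> n \<omega> * indicator B \<omega>) \<partial>M)"
proof -
  let ?g1 = "\<lambda>m x. ennreal (if int x > int m + \<delta> then 1 else 0)"
  let ?g2 = "\<lambda>m x. ennreal (theta M X \<delta> (max m x) - theta M X \<delta> m)"
  have "(\<integral>\<^sup>+\<omega>. ennreal (record_ind \<delta> n \<omega> * indicator B \<omega>) \<partial>M) =
      (\<integral>\<^sup>+\<omega>. ?g1 (maxX X n \<omega>) (X (Suc n) \<omega>) * indicator B \<omega> \<partial>M)"
    by (rule nn_integral_cong) (simp add: record_ind_def split: split_indicator)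
  also have "\<dots> = (\<Sum>m. emeasure M (B \<inter> {\<omega>\<in>space M. maxX X n \<omega> = m}) * ennreal (yk M X (int m + \<delta>)))"
    unfolding nn_integral_maxX_X_Suc[OF B, of ?g1] suminf_record_pk ..
  also have "\<dots> = (\<integral>\<^sup>+\<omega>. ?g2 (maxX X n \<omega>) (X (Suc n) \<omega>) * indicator B \<omega> \<partial>M)"
    unfolding nn_integral_maxX_X_Suc[OF B, of ?g2] suminf_theta_increment_pk ..
  also have "\<dots> = (\<integral>\<^sup>+\<omega>. ennreal (theta_incr \<delta> n \<omega> * indicator B \<omega>) \<partial>M)"
    by (rule nn_integral_cong) (simp add: theta_incr_eq split: split_indicator)
  finally show ?thesis .
qed

lemma integrable_record_ind_indicator:
  assumes "B \<in> events"
  shows "integrable M (\<lambda>\<omega>. record_ind \<delta> n \<omega> * indicator B \<omega>)"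
proof (rule integrable_const_bound[where B=1])
  show "(\<lambda>\<omega>. record_ind \<delta> n \<omega> * indicator B \<omega>) \<in> borel_measurable M"
    using measurable_record_ind assms by (intro borel_measurable_times borel_measurable_indicator)
qed (simp add: record_ind_def split: split_indicator)

lemma integrable_theta_incr_indicator:
  assumes B: "B \<in> sets (natfilt M X n)"
  shows "integrable M (\<lambda>\<omega>. theta_incr \<delta> n \<omega> * indicator B \<omega>)"
proof (rule integrableI_nonneg)
  show "(\<lambda>\<omega>. theta_incr \<delta> n \<omega> * indicator B \<omega>) \<in> borel_measurable M"
    using measurable_theta_incr sets_natfilt_subset_events[OF B] by measurable
  show "AE x in M. 0 \<le> theta_incr \<delta> n x * indicator B x" using theta_incr_nonneg by simp
  have "(\<integral>\<^sup>+\<omega>. ennreal (theta_incr \<delta> n \<omega> * indicator B \<omega>) \<partial>M) =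
      (\<integral>\<^sup>+\<omega>. ennreal (record_ind \<delta> n \<omega> * indicator B \<omega>) \<partial>M)"
    by (rule nn_integral_record_ind_eq_theta_incr[OF B, symmetric])
  also have "\<dots> \<le> (\<integral>\<^sup>+\<omega>. 1 \<partial>M)"
    by (rule nn_integral_mono) (simp add: record_ind_def split: split_indicator)
  finally show "(\<integral>\<^sup>+\<omega>. ennreal (theta_incr \<delta> n \<omega> * indicator B \<omega>) \<partial>M) < \<infinity>"
    by (simp add: emeasure_space_1 order.strict_trans1)
qed

lemma integral_record_ind_eq_theta_incr:
  assumes B: "B \<in> sets (natfilt M X n)"
  shows "(\<integral>\<omega>. record_ind \<delta> n \<omega> * indicator B \<omega> \<partial>M) = (\<integral>\<omega>. theta_incr \<delta> n \<omega> * indicator B \<omega> \<partial>M)"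
proof -
  have [measurable]: "B \<in> events" by (rule sets_natfilt_subset_events[OF B])
  note [measurable] = measurable_record_ind measurable_theta_incr
  have "(\<integral>\<omega>. record_ind \<delta> n \<omega> * indicator B \<omega> \<partial>M) =
      enn2real (\<integral>\<^sup>+\<omega>. ennreal (record_ind \<delta> n \<omega> * indicator B \<omega>) \<partial>M)"
    by (rule integral_eq_nn_integral, measurable) (simp add: record_ind_def split: split_indicator)
  also have "\<dots> = enn2real (\<integral>\<^sup>+\<omega>. ennreal (theta_incr \<delta> n \<omega> * indicator B \<omega>) \<partial>M)"
    by (simp only: nn_integral_record_ind_eq_theta_incr[OF B])
  also have "\<dots> = (\<integral>\<omega>. theta_incr \<delta> n \<omega> * indicator B \<omega> \<partial>M)"
    by (rule integral_eq_nn_integral[symmetric], measurable) (simp add: theta_incr_nonneg)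
  finally show ?thesis .
qed

lemma integrable_compensated_records: "integrable M (compensated_records \<delta> n)"
proof (induction n)
  case (Suc n)
  have "integrable M (\<lambda>\<omega>. record_ind \<delta> n \<omega> * indicator (space M) \<omega>)"
    "integrable M (\<lambda>\<omega>. theta_incr \<delta> n \<omega> * indicator (space M) \<omega>)"
    using integrable_record_ind_indicator integrable_theta_incr_indicator sets.top[of "natfilt M X n"]
    by auto
  then have "integrable M (record_ind \<delta> n)" "integrable M (theta_incr \<delta> n)"
    by (simp_all cong: Bochner_Integration.integrable_cong)
  then show ?case using Suc by (simp add: compensated_records_Suc[abs_def])
qed (simp add: compensated_records_0)

lemma integral_compensated_records_Suc:
  assumes B: "B \<in> sets (natfilt M X n)"
  shows "(\<integral>\<omega>. indicator B \<omega> *\<^sub>R compensated_records \<delta> (Suc n) \<omega> \<partial>M) =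
    (\<integral>\<omega>. indicator B \<omega> *\<^sub>R compensated_records \<delta> n \<omega> \<partial>M)"
proof -
  have BM: "B \<in> events" by (rule sets_natfilt_subset_events[OF B])
  have "(\<integral>\<omega>. indicator B \<omega> *\<^sub>R compensated_records \<delta> (Suc n) \<omega> \<partial>M) =
      (\<integral>\<omega>. indicator B \<omega> *\<^sub>R compensated_records \<delta> n \<omega> + record_ind \<delta> n \<omega> * indicator B \<omega>
        - theta_incr \<delta> n \<omega> * indicator B \<omega> \<partial>M)"
    by (rule Bochner_Integration.integral_cong) (simp_all add: compensated_records_Suc algebra_simps)
  also have "\<dots> = (\<integral>\<omega>. indicator B \<omega> *\<^sub>R compensated_records \<delta> n \<omega> \<partial>M)"
    using integrable_mult_indicator[OF BM integrable_compensated_records]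
      integrable_record_ind_indicator[OF BM] integrable_theta_incr_indicator[OF B]
      integral_record_ind_eq_theta_incr[OF B]
    by simp
  finally show ?thesis .
qed

lemma martingale_compensated_records: "martingale_on M (natfilt M X) (compensated_records \<delta>)"
  unfolding martingale_on_def
proof (intro conjI allI impI)
  fix m n :: nat assume mn: "m \<le> n"
  then show "sets (natfilt M X m) \<subseteq> sets (natfilt M X n)" by (rule natfilt_mono)
  interpret F: finite_measure_subalgebra M "natfilt M X m"
    by unfold_locales (rule subalgebra_natfilt)
  have "(\<integral>\<omega>. indicator A \<omega> *\<^sub>R compensated_records \<delta> n \<omega> \<partial>M) =
      (\<integral>\<omega>. indicator A \<omega> *\<^sub>R compensated_records \<delta> m \<omega> \<partial>M)" if "A \<in> sets (natfilt M X m)" for A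
    using mn
  proof (induction n rule: dec_induct)
    case (step k)
    have "A \<in> sets (natfilt M X k)" using natfilt_mono[OF step(1)] that by blast
    then show ?case using step.IH integral_compensated_records_Suc by simp
  qed simp
  then show "AE \<omega> in M. real_cond_exp M (natfilt M X m) (compensated_records \<delta> n) \<omega> = compensated_records \<delta> m \<omega>"
    by (intro F.real_cond_exp_charact)
      (simp_all add: set_lebesgue_integral_def integrable_compensated_records measurable_compensated_records_natfilt)
qed (simp_all add: subalgebra_natfilt measurable_compensated_records_natfilt integrable_compensated_records)

section \<open>Hazard rates and tail estimates\<close>

definition pmass :: "nat \<Rightarrow> real" where
  "pmass k = pk M X (int k)"

definition tail :: "nat \<Rightarrow> real" where
  "tail k = yk M X (int k - 1)"

definition hazard :: "nat \<Rightarrow> real" where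
  "hazard k = rk M X (int k)"

definition cum_hazard :: "nat \<Rightarrow> real" where
  "cum_hazard m = (\<Sum>i<m. hazard i)"

lemma tail_0: "tail 0 = 1"
  by (simp add: tail_def yk_neg)

lemma tail_Suc: "tail (Suc k) = tail k - pmass k"
  using yk_pred_eq[of k] by (simp add: tail_def pmass_def)

lemma tail_pos: "0 < tail k"
  by (simp add: tail_def yk_pos)

lemma tail_le_1: "tail k \<le> 1"
  by (simp add: tail_def yk_le_1)

lemma pmass_pos: "0 < pmass k"
  by (simp add: pmass_def pk_pos)

lemma pmass_le_tail: "pmass k \<le> tail k"
  using tail_Suc[of k] tail_pos[of "Suc k"] by linarith

lemma tail_antimono: "i \<le> j \<Longrightarrow> tail j \<le> tail i"
  by (rule lift_Suc_antimono_le[of tail]) (use tail_Suc pmass_pos in \<open>auto simp: less_imp_le\<close>)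

lemma hazard_eq: "hazard k = pmass k / tail k"
  by (simp add: hazard_def rk_def pmass_def tail_def)

lemma hazard_nonneg: "0 \<le> hazard k"
  using pmass_pos[of k] tail_pos[of k] by (simp add: hazard_eq)

lemma hazard_le_1: "hazard k \<le> 1"
  using pmass_le_tail[of k] tail_pos[of k] by (simp add: hazard_eq)

lemma tail_Suc_eq_mult: "tail (Suc k) = tail k * (1 - hazard k)"
  using tail_pos[of k] by (simp add: hazard_eq tail_Suc field_simps)

lemma hazard_less_1: "hazard k < 1"
  using tail_pos[of "Suc k"] tail_pos[of k] by (simp add: tail_Suc_eq_mult zero_less_mult_iff)

lemma cum_hazard_nonneg: "0 \<le> cum_hazard m"
  unfolding cum_hazard_def by (rule sum_nonneg) (simp add: hazard_nonneg)

lemma cum_hazard_Suc: "cum_hazard (Suc m) = cum_hazard m + hazard m"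
  by (simp add: cum_hazard_def)

lemma cum_hazard_add_le: "cum_hazard (m + k) \<le> cum_hazard m + real k"
proof (induction k)
  case (Suc k)
  then show ?case using cum_hazard_Suc[of "m + k"] hazard_le_1[of "m + k"] by simp
qed simp

lemma cum_hazard_le: "cum_hazard m \<le> real m"
  using cum_hazard_add_le[of 0 m] by (simp add: cum_hazard_def)

lemma tail_le_exp_cum_hazard: "tail m \<le> exp (- cum_hazard m)"
proof (induction m)
  case (Suc m)
  have "tail (Suc m) = tail m * (1 - hazard m)" by (rule tail_Suc_eq_mult)
  also have "\<dots> \<le> exp (- cum_hazard m) * exp (- hazard m)"
    by (rule mult_mono) (use Suc tail_pos[of m] hazard_le_1[of m] exp_ge_add_one_self[of "- hazard m"] in auto)
  also have "\<dots> = exp (- cum_hazard (Suc m))" by (simp add: cum_hazard_Suc exp_add[symmetric])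
  finally show ?case .
qed (simp add: tail_0 cum_hazard_def)

lemma pmass_cum_hazard_cube_le:
  "pmass m * (1 + cum_hazard m) ^ 3 \<le> 1024 * (sqrt (tail m) - sqrt (tail (Suc m)))"
proof -
  have "sqrt (tail m) \<le> sqrt (exp (- cum_hazard m))" using tail_le_exp_cum_hazard by simp
  also have "exp (- cum_hazard m) = (exp (- cum_hazard m / 2))\<^sup>2"
    by (simp add: power2_eq_square flip: exp_add)
  also have "sqrt \<dots> = exp (- cum_hazard m / 2)" by simp
  finally have "exp (cum_hazard m / 2) \<le> 1 / sqrt (tail m)"
    using tail_pos[of m] by (simp add: exp_minus field_simps)
  then have "pmass m * (1 + cum_hazard m) ^ 3 \<le> pmass m * (512 * (1 / sqrt (tail m)))"
    using cube_le_exp_half[OF cum_hazard_nonneg, of m] pmass_pos[of m]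
    by (intro mult_left_mono) auto
  also have "\<dots> = 512 * ((tail m - tail (Suc m)) / sqrt (tail m))" by (simp add: tail_Suc)
  also have "\<dots> \<le> 512 * (2 * (sqrt (tail m) - sqrt (tail (Suc m))))"
    by (intro mult_left_mono diff_div_sqrt_le) (use less_imp_le[OF tail_pos] tail_pos tail_antimono in auto)
  finally show ?thesis by simp
qed

lemma summable_pmass_cum_hazard_cube: "summable (\<lambda>m. pmass m * (1 + cum_hazard m) ^ 3)"
proof (rule summableI_nonneg_bounded)
  fix n
  show "0 \<le> pmass n * (1 + cum_hazard n) ^ 3" using pmass_pos[of n] cum_hazard_nonneg[of n] by simp
  have "(\<Sum>i<n. pmass i * (1 + cum_hazard i) ^ 3) \<le> (\<Sum>i<n. 1024 * (sqrt (tail i) - sqrt (tail (Suc i))))"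
    by (rule sum_mono) (rule pmass_cum_hazard_cube_le)
  also have "\<dots> = 1024 * (sqrt (tail 0) - sqrt (tail n))"
    using sum_lessThan_telescope'[of "\<lambda>i. 1024 * sqrt (tail i)" n] by (simp add: algebra_simps)
  also have "\<dots> \<le> 1024" using tail_0 tail_pos[of n] by simp
  finally show "(\<Sum>i<n. pmass i * (1 + cum_hazard i) ^ 3) \<le> 1024" .
qed

lemma summable_pmass_theta_cube_of_linear_bound:
  assumes "0 \<le> C" "\<And>m. theta M X \<delta> m \<le> C * (1 + cum_hazard m)"
  shows "summable (\<lambda>m. pmass m * theta M X \<delta> m ^ 3)"
proof (rule summable_comparison_test')
  show "summable (\<lambda>m. C ^ 3 * (pmass m * (1 + cum_hazard m) ^ 3))"
    by (rule summable_mult[OF summable_pmass_cum_hazard_cube])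
  fix m
  have "theta M X \<delta> m ^ 3 \<le> (C * (1 + cum_hazard m)) ^ 3" by (rule power_mono[OF assms(2) theta_nonneg])
  then have "pmass m * theta M X \<delta> m ^ 3 \<le> pmass m * (C * (1 + cum_hazard m)) ^ 3"
    using pmass_pos[of m] by (simp add: mult_left_mono)
  then show "norm (pmass m * theta M X \<delta> m ^ 3) \<le> C ^ 3 * (pmass m * (1 + cum_hazard m) ^ 3)"
    using theta_nonneg[of M X \<delta> m] pmass_pos[of m] by (simp add: power_mult_distrib)
qed

lemma sk_nonneg_delta: "sk M X (int d) (int i) = pmass (i + d) / tail i"
  by (simp add: sk_def pmass_def tail_def)

lemma sk_neg_delta: "sk M X (- int d) (int i) = (if d \<le> i then pmass (i - d) / tail i else 0)"
  by (auto simp: sk_def pmass_def tail_def pk_neg of_nat_diff)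

lemma theta_nonneg_delta_le: "theta M X (int d) m \<le> (real d + 1) * (1 + cum_hazard m)"
proof -
  have "theta M X (int d) m \<le> (\<Sum>i=0..m. hazard (i + d))"
    unfolding theta_def sk_nonneg_delta hazard_eq
    by (intro sum_mono divide_left_mono) (use tail_antimono tail_pos less_imp_le[OF pmass_pos] in auto)
  also have "\<dots> = (\<Sum>j=0+d..m+d. hazard j)" by (rule sum.shift_bounds_cl_nat_ivl[symmetric])
  also have "\<dots> \<le> (\<Sum>j<m + d + 1. hazard j)" by (rule sum_mono2) (auto simp: hazard_nonneg)
  also have "\<dots> \<le> cum_hazard m + real (d + 1)"
    using cum_hazard_add_le[of m "d + 1"] by (simp add: cum_hazard_def add.assoc)
  also have "\<dots> \<le> (real d + 1) * (1 + cum_hazard m)" using cum_hazard_nonneg[of m] by (simp add: algebra_simps)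
  finally show ?thesis .
qed

lemma tail_shift_ge:
  assumes "\<And>k. k < j + d \<Longrightarrow> b \<le> 1 - hazard k" "0 \<le> b"
  shows "b ^ d * tail j \<le> tail (j + d)"
  using assms(1)
proof (induction d)
  case (Suc d)
  have "b ^ Suc d * tail j = b * (b ^ d * tail j)" by simp
  also have "\<dots> \<le> (1 - hazard (j + d)) * tail (j + d)"
    by (rule mult_mono) (use Suc assms(2) tail_pos[of j] hazard_le_1[of "j + d"] in auto)
  also have "\<dots> = tail (j + Suc d)" by (simp add: tail_Suc_eq_mult mult.commute)
  finally show ?case .
qed simp

lemma theta_neg_delta_le:
  assumes "\<And>k. k < m \<Longrightarrow> b \<le> 1 - hazard k" "0 < b"
  shows "theta M X (- int d) m \<le> (1 + cum_hazard m) / b ^ d"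
proof -
  have sk_le: "sk M X (- int d) (int i) \<le> (if d \<le> i then hazard (i - d) / b ^ d else 0)" if "i \<le> m" for i
  proof (cases "d \<le> i")
    case True
    define j where "j = i - d"
    have i: "i = j + d" using True by (simp add: j_def)
    have "b ^ d * tail j \<le> tail (j + d)" by (rule tail_shift_ge) (use assms that i in auto)
    then have "pmass j / tail (j + d) \<le> pmass j / (b ^ d * tail j)"
      by (intro divide_left_mono)
        (use assms tail_pos[of j] tail_pos[of "j + d"] pmass_pos[of j] in \<open>auto intro!: mult_pos_pos\<close>)
    then show ?thesis using True unfolding sk_neg_delta by (simp add: i hazard_eq mult.commute)
  qed (simp add: sk_neg_delta)
  have "theta M X (- int d) m \<le> (\<Sum>i\<in>{0..m}. if d \<le> i then hazard (i - d) / b ^ d else 0)"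
    unfolding theta_def by (rule sum_mono) (rule sk_le; simp)
  also have "\<dots> = (\<Sum>i\<in>{0..m} \<inter> {i. d \<le> i}. hazard (i - d) / b ^ d)"
    by (simp add: sum.inter_restrict)
  also have "{0..m} \<inter> {i. d \<le> i} = {d..m}" by auto
  also have "(\<Sum>i=d..m. hazard (i - d) / b ^ d) = (\<Sum>i=d..m. hazard (i - d)) / b ^ d"
    by (simp add: sum_divide_distrib)
  also have "\<dots> \<le> (1 + cum_hazard m) / b ^ d"
  proof (rule divide_right_mono)
    have "(\<Sum>i=d..m. hazard (i - d)) \<le> (\<Sum>j\<le>m. hazard j)" by (rule sum_shifted_index_le) (rule hazard_nonneg)
    also have "\<dots> = cum_hazard m + hazard m" by (simp add: cum_hazard_def lessThan_Suc_atMost[symmetric])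
    finally show "(\<Sum>i=d..m. hazard (i - d)) \<le> 1 + cum_hazard m" using hazard_le_1[of m] by simp
  qed (use assms in simp)
  finally show ?thesis .
qed

lemma hazard_gap:
  assumes "limsup (\<lambda>k. ereal (hazard k)) < 1"
  obtains b where "0 < b" "\<And>k. b \<le> 1 - hazard k"
proof -
  obtain \<rho> where \<rho>: "limsup (\<lambda>k. ereal (hazard k)) < ereal \<rho>" "\<rho> < 1"
    using ereal_dense2[OF assms] by auto
  have "eventually (\<lambda>k. ereal (hazard k) < ereal \<rho>) sequentially" by (rule Limsup_lessD[OF \<rho>(1)])
  then obtain K where K: "\<And>k. k \<ge> K \<Longrightarrow> hazard k < \<rho>" unfolding eventually_sequentially by auto
  define b where "b = Min (insert (1 - \<rho>) ((\<lambda>k. 1 - hazard k) ` {..<K}))"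
  show thesis
  proof
    show "0 < b" unfolding b_def using \<rho>(2) hazard_less_1 by (subst Min_gr_iff) auto
    show "b \<le> 1 - hazard k" for k
    proof (cases "k < K")
      case False
      then have "b \<le> 1 - \<rho>" "\<rho> > hazard k" unfolding b_def using K by auto
      then show ?thesis by simp
    qed (simp add: b_def)
  qed
qed

lemma hazard_gap_geometric:
  assumes "(\<lambda>k. (1 - hazard (Suc k)) / (1 - hazard k)) \<longlonglongrightarrow> 1"
  obtains c where "0 < c" "\<And>k. c / 2 ^ k \<le> 1 - hazard k"
proof -
  have "eventually (\<lambda>k. dist ((1 - hazard (Suc k)) / (1 - hazard k)) 1 < 1 / 2) sequentially"
    by (rule tendstoD[OF assms]) simp
  then obtain K where K: "\<And>k. k \<ge> K \<Longrightarrow> \<bar>(1 - hazard (Suc k)) / (1 - hazard k) - 1\<bar> < 1 / 2"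
    unfolding eventually_sequentially dist_real_def by blast
  have ratio: "(1 - hazard k) / 2 < 1 - hazard (Suc k)" if "k \<ge> K" for k
  proof -
    have "1 / 2 < (1 - hazard (Suc k)) / (1 - hazard k)" using K[OF that] by linarith
    then show ?thesis using hazard_less_1[of k] by (simp add: field_simps)
  qed
  define c where "c = Min ((\<lambda>k. 1 - hazard k) ` {..K})"
  have c_le: "c \<le> 1 - hazard k" if "k \<le> K" for k unfolding c_def using that by (intro Min_le) auto
  show thesis
  proof
    show "0 < c" unfolding c_def using hazard_less_1 by (subst Min_gr_iff) auto
    show "c / 2 ^ k \<le> 1 - hazard k" for k
    proof (induction k)
      case 0
      then show ?case using c_le[of 0] by simp
    next
      case (Suc k)
      show ?case
      proof (cases "Suc k \<le> K")
        case True
        have "c / 2 ^ Suc k \<le> c" using \<open>0 < c\<close> by (simp add: divide_le_eq order_trans[OF one_le_power[of 2 k]])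
        then show ?thesis using c_le[OF True] by simp
      next
        case False
        then have "(1 - hazard k) / 2 < 1 - hazard (Suc k)" by (intro ratio) simp
        have "c / 2 ^ Suc k = (c / 2 ^ k) / 2" by simp
        also have "\<dots> \<le> (1 - hazard k) / 2" using Suc.IH by simp
        finally show ?thesis using \<open>(1 - hazard k) / 2 < 1 - hazard (Suc k)\<close> by simp
      qed
    qed
  qed
qed

lemma tail_le_geometric:
  assumes "\<And>k. K \<le> k \<Longrightarrow> 1 - hazard k \<le> \<epsilon>" "0 \<le> \<epsilon>" "\<epsilon> \<le> 1"
  shows "tail m * \<epsilon> ^ K \<le> \<epsilon> ^ m"
proof (induction m)
  case 0
  show ?case using assms by (simp add: tail_0 power_le_one)
next
  case (Suc m)
  show ?case
  proof (cases "K \<le> m")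
    case True
    have "tail (Suc m) * \<epsilon> ^ K = (tail m * \<epsilon> ^ K) * (1 - hazard m)"
      by (simp add: tail_Suc_eq_mult)
    also have "\<dots> \<le> \<epsilon> ^ m * \<epsilon>"
      by (rule mult_mono) (use Suc assms True tail_pos[of m] hazard_le_1[of m] in auto)
    finally show ?thesis by (simp add: mult.commute)
  next
    case False
    have "tail (Suc m) * \<epsilon> ^ K \<le> \<epsilon> ^ K"
      using tail_le_1[of "Suc m"] tail_pos[of "Suc m"] assms(2) by (simp add: mult_left_le_one_le)
    also have "\<dots> \<le> \<epsilon> ^ Suc m" by (rule power_decreasing) (use False assms in auto)
    finally show ?thesis .
  qed
qed

lemma theta_neg_delta_le_geometric:
  assumes "0 < c" "\<And>k. c / 2 ^ k \<le> 1 - hazard k"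
  shows "theta M X (- int d) m \<le> (real m + 1) * (2 ^ d) ^ m / c ^ d"
proof -
  have "c / 2 ^ m \<le> 1 - hazard k" if "k < m" for k
    using assms that by (intro order_trans[OF _ assms(2)] divide_left_mono power_increasing) auto
  then have "theta M X (- int d) m \<le> (1 + cum_hazard m) / (c / 2 ^ m) ^ d"
    using assms(1) by (intro theta_neg_delta_le) auto
  also have "((2::real) ^ m) ^ d = (2 ^ d) ^ m" by (simp flip: power_mult add: mult.commute)
  then have "(c / 2 ^ m) ^ d = c ^ d / (2 ^ d) ^ m" by (simp add: power_divide)
  also have "(1 + cum_hazard m) / (c ^ d / (2 ^ d) ^ m) = (1 + cum_hazard m) * (2 ^ d) ^ m / c ^ d" by simp
  also have "\<dots> \<le> (real m + 1) * (2 ^ d) ^ m / c ^ d"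
    using cum_hazard_le[of m] assms(1) by (intro divide_right_mono mult_right_mono) auto
  finally show ?thesis .
qed

lemma summable_pmass_theta_cube_nonneg_delta:
  assumes "0 \<le> \<delta>"
  shows "summable (\<lambda>m. pmass m * theta M X \<delta> m ^ 3)"
proof -
  obtain d where "\<delta> = int d" using assms nonneg_int_cases by blast
  then show ?thesis
    by (intro summable_pmass_theta_cube_of_linear_bound[of "real d + 1"]) (simp_all add: theta_nonneg_delta_le)
qed

lemma summable_pmass_theta_cube_hazard_gap:
  assumes "\<delta> < 0" "limsup (\<lambda>k::nat. ereal (rk M X (int k))) < 1"
  shows "summable (\<lambda>m. pmass m * theta M X \<delta> m ^ 3)"
proof -
  define d where "d = nat (- \<delta>)"
  have \<delta>: "\<delta> = - int d" using assms(1) by (simp add: d_def)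
  have "limsup (\<lambda>k. ereal (hazard k)) < 1" using assms(2) by (simp add: hazard_def)
  then obtain b where b: "0 < b" "\<And>k. b \<le> 1 - hazard k" by (rule hazard_gap) blast
  have "theta M X \<delta> m \<le> 1 / b ^ d * (1 + cum_hazard m)" for m
    using theta_neg_delta_le[of m b d] b unfolding \<delta> by simp
  then show ?thesis using b(1) by (intro summable_pmass_theta_cube_of_linear_bound[of "1 / b ^ d"]) simp_all
qed

lemma summable_pmass_theta_cube_hazard_to_1:
  assumes "\<delta> < 0" "(\<lambda>k::nat. rk M X (int k)) \<longlonglongrightarrow> 1"
    and "(\<lambda>k::nat. (1 - rk M X (int k)) / (1 - rk M X (int k - 1))) \<longlonglongrightarrow> 1"
  shows "summable (\<lambda>m. pmass m * theta M X \<delta> m ^ 3)"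
proof -
  define d where "d = nat (- \<delta>)"
  have \<delta>: "\<delta> = - int d" using assms(1) by (simp add: d_def)
  have "(\<lambda>k. (1 - hazard (Suc k)) / (1 - hazard k)) \<longlonglongrightarrow> 1"
    using LIMSEQ_Suc[OF assms(3)] by (simp add: hazard_def)
  then obtain c where c: "0 < c" "\<And>k. c / 2 ^ k \<le> 1 - hazard k" by (rule hazard_gap_geometric) blast
  define u :: real where "u = 2 ^ d"
  \<comment> \<open>so that \<open>\<epsilon> * 8 * u ^ 3 = 1 / 2\<close> beats both \<open>(m + 1) ^ 3 \<le> 8 ^ m\<close> and the growth \<open>u ^ (3 * m)\<close> of \<open>\<theta>(m) ^ 3\<close>\<close>
  define \<epsilon> where "\<epsilon> = 1 / (16 * u ^ 3)"
  have u: "0 < u" "1 \<le> u" by (simp_all add: u_def)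
  then have "1 \<le> u ^ 3" by (simp add: one_le_power)
  then have \<epsilon>: "0 < \<epsilon>" "\<epsilon> \<le> 1" "\<epsilon> * 8 * u ^ 3 = 1 / 2"
    using u(1) unfolding \<epsilon>_def by (simp_all add: divide_le_eq)
  have "eventually (\<lambda>k. dist (hazard k) 1 < \<epsilon>) sequentially"
    using assms(2) \<epsilon>(1) unfolding hazard_def by (rule tendstoD)
  then obtain K where K: "\<And>k. K \<le> k \<Longrightarrow> 1 - hazard k \<le> \<epsilon>"
    unfolding eventually_sequentially dist_real_def by (force simp: abs_less_iff)
  define a where "a = c ^ d"
  have a: "0 < a" using c(1) by (simp add: a_def)
  have theta_le: "theta M X \<delta> m \<le> (real m + 1) * u ^ m / a" for m
    unfolding \<delta> a_def u_def by (rule theta_neg_delta_le_geometric[OF c])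
  show ?thesis
  proof (rule summable_comparison_test')
    show "summable (\<lambda>m. 1 / (\<epsilon> ^ K * a ^ 3) * (1 / 2) ^ m)"
      by (rule summable_mult) (rule summable_geometric; simp)
    fix m
    have "pmass m * theta M X \<delta> m ^ 3 \<le> tail m * ((real m + 1) * u ^ m / a) ^ 3"
      by (intro mult_mono power_mono pmass_le_tail theta_le) (use theta_nonneg tail_pos[of m] in auto)
    also have "((real m + 1) * u ^ m / a) ^ 3 = (real m + 1) ^ 3 * (u ^ 3) ^ m / a ^ 3"
      by (simp add: power_divide power_mult_distrib flip: power_mult) (simp add: mult.commute)
    also have "tail m * \<dots> = (tail m * \<epsilon> ^ K) * ((real m + 1) ^ 3 * (u ^ 3) ^ m) / (\<epsilon> ^ K * a ^ 3)"
      using \<epsilon>(1) by simp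
    also have "\<dots> \<le> \<epsilon> ^ m * (8 ^ m * (u ^ 3) ^ m) / (\<epsilon> ^ K * a ^ 3)"
      by (intro divide_right_mono mult_mono tail_le_geometric Suc_cube_le_8_power)
        (use K \<epsilon> a u(1) in simp_all)
    also have "\<epsilon> ^ m * (8 ^ m * (u ^ 3) ^ m) = (\<epsilon> * 8 * u ^ 3) ^ m"
      by (simp only: power_mult_distrib mult.assoc)
    also have "\<dots> = (1 / 2) ^ m" by (simp only: \<epsilon>(3))
    finally show "norm (pmass m * theta M X \<delta> m ^ 3) \<le> 1 / (\<epsilon> ^ K * a ^ 3) * (1 / 2) ^ m"
      using theta_nonneg[of M X \<delta> m] pmass_pos[of m] by simp
  qed
qed

section \<open>Cubic integrability\<close>

lemma prob_maxX_eq_le: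
  assumes "1 \<le> n"
  shows "prob {\<omega>\<in>space M. maxX X n \<omega> = m} \<le> real n * pmass m"
proof -
  have events: "(\<lambda>i. {\<omega>\<in>space M. X i \<omega> = m}) ` {1..n} \<subseteq> events" using events_X by auto
  have "{\<omega>\<in>space M. maxX X n \<omega> = m} \<subseteq> (\<Union>i\<in>{1..n}. {\<omega>\<in>space M. X i \<omega> = m})"
  proof
    fix \<omega> assume "\<omega> \<in> {\<omega>\<in>space M. maxX X n \<omega> = m}"
    moreover obtain i where "i \<in> {1..n}" "X i \<omega> = maxX X n \<omega>" by (rule maxX_attained[OF assms])
    ultimately show "\<omega> \<in> (\<Union>i\<in>{1..n}. {\<omega>\<in>space M. X i \<omega> = m})" by auto
  qed
  then have "prob {\<omega>\<in>space M. maxX X n \<omega> = m} \<le> prob (\<Union>i\<in>{1..n}. {\<omega>\<in>space M. X i \<omega> = m})"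
    by (rule finite_measure_mono) (use events in blast)
  also have "\<dots> \<le> (\<Sum>i\<in>{1..n}. prob {\<omega>\<in>space M. X i \<omega> = m})"
    by (rule finite_measure_subadditive_finite[OF _ events]) simp
  also have "\<dots> = (\<Sum>i\<in>{1..n}. pmass m)"
  proof (rule sum.cong)
    fix i assume "i \<in> {1..n}"
    then show "prob {\<omega>\<in>space M. X i \<omega> = m} = pmass m"
      using prob_X_eq_prob_X1[of i "\<lambda>v. v = m"] by (simp add: pmass_def pk_nat)
  qed simp
  finally show ?thesis by simp
qed

lemma nn_integral_theta_maxX_cube_finite:
  assumes "1 \<le> n" "summable (\<lambda>m. pmass m * theta M X \<delta> m ^ 3)"
  shows "(\<integral>\<^sup>+\<omega>. ennreal (theta M X \<delta> (maxX X n \<omega>) ^ 3) \<partial>M) < \<infinity>"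
proof -
  let ?Y = "maxX X n"
  have "(\<lambda>\<omega>. ennreal (theta M X \<delta> (?Y \<omega>) ^ 3)) \<in> borel_measurable M"
    by (rule measurable_compose[OF measurable_maxX]) simp
  then have "(\<integral>\<^sup>+\<omega>. ennreal (theta M X \<delta> (?Y \<omega>) ^ 3) \<partial>M) =
      (\<Sum>m. \<integral>\<^sup>+\<omega>. ennreal (theta M X \<delta> (?Y \<omega>) ^ 3) * indicator {\<omega>\<in>space M. ?Y \<omega> = m} \<omega> \<partial>M)"
    by (rule nn_integral_split_level_sets[OF measurable_maxX])
  also have "\<dots> = (\<Sum>m. ennreal (theta M X \<delta> m ^ 3) * emeasure M {\<omega>\<in>space M. ?Y \<omega> = m})"
  proof (rule suminf_cong)
    fix m
    have "(\<integral>\<^sup>+\<omega>. ennreal (theta M X \<delta> (?Y \<omega>) ^ 3) * indicator {\<omega>\<in>space M. ?Y \<omega> = m} \<omega> \<partial>M) =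
        (\<integral>\<^sup>+\<omega>. ennreal (theta M X \<delta> m ^ 3) * indicator {\<omega>\<in>space M. ?Y \<omega> = m} \<omega> \<partial>M)"
      by (rule nn_integral_cong) (simp split: split_indicator)
    also have "\<dots> = ennreal (theta M X \<delta> m ^ 3) * emeasure M {\<omega>\<in>space M. ?Y \<omega> = m}"
      by (rule nn_integral_cmult_indicator[OF level_set_in_sets[OF measurable_maxX]])
    finally show "(\<integral>\<^sup>+\<omega>. ennreal (theta M X \<delta> (?Y \<omega>) ^ 3) * indicator {\<omega>\<in>space M. ?Y \<omega> = m} \<omega> \<partial>M) =
        ennreal (theta M X \<delta> m ^ 3) * emeasure M {\<omega>\<in>space M. ?Y \<omega> = m}" .
  qed
  also have "\<dots> \<le> (\<Sum>m. ennreal (real n * (pmass m * theta M X \<delta> m ^ 3)))"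
  proof (intro suminf_le allI)
    fix m
    have "emeasure M {\<omega>\<in>space M. ?Y \<omega> = m} \<le> ennreal (real n * pmass m)"
      using prob_maxX_eq_le[OF assms(1)] level_set_in_sets[OF measurable_maxX]
      by (simp add: emeasure_eq_measure ennreal_leI)
    then have "ennreal (theta M X \<delta> m ^ 3) * emeasure M {\<omega>\<in>space M. ?Y \<omega> = m} \<le>
        ennreal (theta M X \<delta> m ^ 3) * ennreal (real n * pmass m)" by (rule mult_left_mono) simp
    then show "ennreal (theta M X \<delta> m ^ 3) * emeasure M {\<omega>\<in>space M. ?Y \<omega> = m} \<le>
        ennreal (real n * (pmass m * theta M X \<delta> m ^ 3))"
      using theta_nonneg[of M X \<delta> m] pmass_pos[of m] by (simp add: ennreal_mult[symmetric] mult_ac)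
  qed simp_all
  also have "\<dots> = ennreal (\<Sum>m. real n * (pmass m * theta M X \<delta> m ^ 3))"
    by (intro suminf_ennreal2 summable_mult assms(2)) (simp add: theta_nonneg less_imp_le[OF pmass_pos])
  also have "\<dots> < \<infinity>" by simp
  finally show ?thesis .
qed

lemma integrable_compensated_records_cube:
  assumes "1 \<le> n" "summable (\<lambda>m. pmass m * theta M X \<delta> m ^ 3)"
  shows "integrable M (\<lambda>\<omega>. \<bar>compensated_records \<delta> n \<omega>\<bar> ^ 3)"
proof (rule Bochner_Integration.integrable_bound)
  have "(\<lambda>\<omega>. theta M X \<delta> (maxX X n \<omega>) ^ 3) \<in> borel_measurable M"
    by (rule measurable_compose[OF measurable_maxX]) simp
  then have "integrable M (\<lambda>\<omega>. theta M X \<delta> (maxX X n \<omega>) ^ 3)"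
    using nn_integral_theta_maxX_cube_finite[OF assms] by (intro integrableI_nonneg) (simp_all add: theta_nonneg)
  then show "integrable M (\<lambda>\<omega>. 4 * (real n ^ 3 + theta M X \<delta> (maxX X n \<omega>) ^ 3))" by simp
  show "(\<lambda>\<omega>. \<bar>compensated_records \<delta> n \<omega>\<bar> ^ 3) \<in> borel_measurable M"
    using measurable_compensated_records by measurable
  show "AE \<omega> in M. norm (\<bar>compensated_records \<delta> n \<omega>\<bar> ^ 3) \<le> norm (4 * (real n ^ 3 + theta M X \<delta> (maxX X n \<omega>) ^ 3))"
  proof (rule AE_I2)
    fix \<omega>
    let ?T = "theta M X \<delta> (maxX X n \<omega>)"
    have "\<bar>compensated_records \<delta> n \<omega>\<bar> \<le> real n + ?T"
      using Nrec_nonneg[of X \<delta> n \<omega>] Nrec_le[of X \<delta> n \<omega>] theta_nonneg[of M X \<delta> "maxX X n \<omega>"]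
      by (simp add: compensated_records_def)
    then have "\<bar>compensated_records \<delta> n \<omega>\<bar> ^ 3 \<le> (real n + ?T) ^ 3" by (rule power_mono) simp
    also have "\<dots> \<le> 4 * (real n ^ 3 + ?T ^ 3)" by (rule cube_add_le) (simp_all add: theta_nonneg)
    finally show "norm (\<bar>compensated_records \<delta> n \<omega>\<bar> ^ 3) \<le> norm (4 * (real n ^ 3 + ?T ^ 3))"
      using theta_nonneg[of M X \<delta> "maxX X n \<omega>"] by simp
  qed
qed

end

theorem proposition2p1:
  fixes M :: "'a measure" and X :: "nat \<Rightarrow> 'a \<Rightarrow> nat" and \<delta> :: int
  assumes "prob_space M"
    and "\<And>i. i \<ge> 1 \<Longrightarrow> X i \<in> measurable M (count_space UNIV)"
    and "prob_space.indep_vars M (\<lambda>_. count_space UNIV) X {1..}"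
    and "\<And>i. i \<ge> 1 \<Longrightarrow> distr M (count_space UNIV) (X i) = distr M (count_space UNIV) (X 1)"
    and "\<And>k. measure M {\<omega> \<in> space M. X 1 \<omega> = k} > 0"
  shows "martingale_on M (natfilt M X) (\<lambda>n \<omega>. Nrec X \<delta> n \<omega> - theta M X \<delta> (maxX X n \<omega>)) \<and>
    ((\<delta> < 0 \<and> limsup (\<lambda>k::nat. ereal (rk M X (int k))) < 1) \<or>
         (\<delta> < 0 \<and> (\<lambda>k::nat. rk M X (int k)) \<longlonglongrightarrow> 1 \<and>
            (\<lambda>k::nat. (1 - rk M X (int k)) / (1 - rk M X (int k - 1))) \<longlonglongrightarrow> 1) \<or>
         \<delta> \<ge> 0
     \<longrightarrow> (\<forall>n\<ge>1. integrable M (\<lambda>\<omega>. \<bar>Nrec X \<delta> n \<omega> - theta M X \<delta> (maxX X n \<omega>)\<bar> ^ 3)))"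
proof -
  interpret iid_nat_sequence M X
    by (rule iid_nat_sequence.intro[OF assms(1)]) (unfold iid_nat_sequence_axioms_def, use assms in blast)
  have Z: "Nrec X \<delta> n \<omega> - theta M X \<delta> (maxX X n \<omega>) = compensated_records \<delta> n \<omega>" for n \<omega>
    by (simp add: compensated_records_def)
  show ?thesis
    unfolding Z
  proof (intro conjI impI allI)
    show "martingale_on M (natfilt M X) (compensated_records \<delta>)"
      by (rule martingale_compensated_records)
    fix n :: nat
    assume "(\<delta> < 0 \<and> limsup (\<lambda>k::nat. ereal (rk M X (int k))) < 1) \<or>
         (\<delta> < 0 \<and> (\<lambda>k::nat. rk M X (int k)) \<longlonglongrightarrow> 1 \<and>
            (\<lambda>k::nat. (1 - rk M X (int k)) / (1 - rk M X (int k - 1))) \<longlonglongrightarrow> 1) \<or> \<delta> \<ge> 0"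
      and n: "1 \<le> n"
    then have "summable (\<lambda>m. pmass m * theta M X \<delta> m ^ 3)"
      using summable_pmass_theta_cube_hazard_gap summable_pmass_theta_cube_hazard_to_1
        summable_pmass_theta_cube_nonneg_delta by blast
    then show "integrable M (\<lambda>\<omega>. \<bar>compensated_records \<delta> n \<omega>\<bar> ^ 3)"
      by (rule integrable_compensated_records_cube[OF n])
  qed
qed

end
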